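(* Let $T>0$. If $\int_{\mathbb{Q}_p^N}\|\xi\|_p^{d\beta}d\mu(\xi)<+\infty$, then \[ \lim_{h\to0^+}\int_0^T\int_{\mathbb{Q}_p^N}\sup_{|r-t|<h}\left|\mathcal{F}\Gamma(r)(\xi)-\mathcal{F}\Gamma(t)(\xi)\right|^2d\mu(\xi)\,dt=0 . \] Furthermore, the same condition implies $\int_0^Tdt\int_{\mathbb{Q}_p^N}|\mathcal{F}\Gamma(t)(\xi)|^2d\mu(\xi)<+\infty$.
   Context: $p$ prime; $\mathbb{Q}_p^N$ with $\|x\|_p=\max_i|x_i|_p$, normalized Haar measure, Fourier transform $(\mathcal{F}\varphi)(\xi)=\int\chi_p(-\xi\cdot x)\varphi(x)d^Nx$, $\chi_p(y)=\exp(2\pi i\{y\}_p)$. $a(\xi)$ is an elliptic polynomial of degree $d$ (homogeneous of degree $d$, $a(\xi)=0\iff\xi=0$), $\beta>0$, and $\Gamma(t,x)=\mathcal{F}^{-1}_{\xi\to x}(e^{-t|a(\xi)|_p^\beta})$ for $t>0$, $\Gamma(0)=\delta$, so $\mathcal{F}\Gamma(t)(\xi)=e^{-t|a(\xi)|_p^\beta}$. $\mu$ is a regular Borel measure on $\mathbb{Q}_p^N$ (the spectral measure of the noise: $\mathcal{F}\mu=f$ with $f$ nonnegative continuous on $\mathbb{Q}_p^N\setminus\{0\}$ defining a positive-definite distribution). *)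

theory Defs
  imports "HOL-Analysis.Analysis" "HOL-Computational_Algebra.Computational_Algebra"
begin

definition padic_abs :: "nat \<Rightarrow> rat \<Rightarrow> real" where
  "padic_abs p q = (if q = 0 then 0 else
     real p powr (- (real_of_int (int (multiplicity (int p) (fst (quotient_of q)))
                                 - int (multiplicity (int p) (snd (quotient_of q)))))))"

definition qp_cauchy :: "nat \<Rightarrow> (nat \<Rightarrow> rat) \<Rightarrow> bool" where
  "qp_cauchy p X = (\<forall>e>0. \<exists>M. \<forall>m\<ge>M. \<forall>n\<ge>M. padic_abs p (X m - X n) < e)"

definition qp_equiv :: "nat \<Rightarrow> (nat \<Rightarrow> rat) \<Rightarrow> (nat \<Rightarrow> rat) \<Rightarrow> bool" where
  "qp_equiv p X Y = ((\<lambda>n. padic_abs p (X n - Y n)) \<longlonglongrightarrow> 0)"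

definition qp_class :: "nat \<Rightarrow> (nat \<Rightarrow> rat) \<Rightarrow> (nat \<Rightarrow> rat) set" where
  "qp_class p X = {Y. qp_cauchy p Y \<and> qp_equiv p X Y}"

definition Qp :: "nat \<Rightarrow> (nat \<Rightarrow> rat) set set" where
  "Qp p = {qp_class p X | X. qp_cauchy p X}"

definition qp_rep :: "(nat \<Rightarrow> rat) set \<Rightarrow> (nat \<Rightarrow> rat)" where
  "qp_rep x = (SOME X. X \<in> x)"

definition qp_zero :: "nat \<Rightarrow> (nat \<Rightarrow> rat) set" where
  "qp_zero p = qp_class p (\<lambda>_. 0)"

definition qp_abs :: "nat \<Rightarrow> (nat \<Rightarrow> rat) set \<Rightarrow> real" where
  "qp_abs p x = lim (\<lambda>n. padic_abs p (qp_rep x n))"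

definition qp_dist :: "nat \<Rightarrow> (nat \<Rightarrow> rat) set \<Rightarrow> (nat \<Rightarrow> rat) set \<Rightarrow> real" where
  "qp_dist p x y = lim (\<lambda>n. padic_abs p (qp_rep x n - qp_rep y n))"

section \<open>Q_p^N with the max norm; N is the cardinality of the finite index type 'n\<close>

definition qp_space :: "nat \<Rightarrow> ('n::finite \<Rightarrow> (nat \<Rightarrow> rat) set) set" where
  "qp_space p = {\<xi>. \<forall>i. \<xi> i \<in> Qp p}"

definition qp_zero_vec :: "nat \<Rightarrow> ('n::finite \<Rightarrow> (nat \<Rightarrow> rat) set)" where
  "qp_zero_vec p = (\<lambda>i. qp_zero p)"

definition qp_norm :: "nat \<Rightarrow> ('n::finite \<Rightarrow> (nat \<Rightarrow> rat) set) \<Rightarrow> real" where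
  "qp_norm p \<xi> = Max (range (\<lambda>i. qp_abs p (\<xi> i)))"

definition qp_vdist :: "nat \<Rightarrow> ('n::finite \<Rightarrow> (nat \<Rightarrow> rat) set) \<Rightarrow> ('n \<Rightarrow> (nat \<Rightarrow> rat) set) \<Rightarrow> real" where
  "qp_vdist p \<xi> \<eta> = Max (range (\<lambda>i. qp_dist p (\<xi> i) (\<eta> i)))"

definition qp_open :: "nat \<Rightarrow> ('n::finite \<Rightarrow> (nat \<Rightarrow> rat) set) set \<Rightarrow> bool" where
  "qp_open p U = (U \<subseteq> qp_space p \<and>
     (\<forall>\<xi>\<in>U. \<exists>e>0. {\<eta> \<in> qp_space p. qp_vdist p \<xi> \<eta> < e} \<subseteq> U))"

definition qp_compact :: "nat \<Rightarrow> ('n::finite \<Rightarrow> (nat \<Rightarrow> rat) set) set \<Rightarrow> bool" where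
  "qp_compact p K = (K \<subseteq> qp_space p \<and>
     (\<forall>C. (\<forall>U\<in>C. qp_open p U) \<and> K \<subseteq> \<Union>C \<longrightarrow> (\<exists>F\<subseteq>C. finite F \<and> K \<subseteq> \<Union>F)))"

definition qp_borel :: "nat \<Rightarrow> ('n::finite \<Rightarrow> (nat \<Rightarrow> rat) set) measure" where
  "qp_borel p = sigma (qp_space p) {U. qp_open p U}"

definition qp_regular_borel :: "nat \<Rightarrow> ('n::finite \<Rightarrow> (nat \<Rightarrow> rat) set) measure \<Rightarrow> bool" where
  "qp_regular_borel p \<mu> =
    (sets \<mu> = sets (qp_borel p) \<and>
     (\<forall>K. qp_compact p K \<longrightarrow> emeasure \<mu> K < \<infinity>) \<and>
     (\<forall>A\<in>sets \<mu>. emeasure \<mu> A = (INF U\<in>{U. qp_open p U \<and> A \<subseteq> U}. emeasure \<mu> U)) \<and>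
     (\<forall>U. qp_open p U \<longrightarrow> emeasure \<mu> U = (SUP K\<in>{K. qp_compact p K \<and> K \<subseteq> U}. emeasure \<mu> K)))"

text \<open>A homogeneous polynomial of degree d is given by its coefficients c alpha (alpha a
  multi-index with |alpha| = d). |a(xi)|_p is computed on Cauchy representatives.\<close>
definition qp_poly_abs :: "nat \<Rightarrow> nat \<Rightarrow> (('n::finite \<Rightarrow> nat) \<Rightarrow> (nat \<Rightarrow> rat) set)
     \<Rightarrow> ('n \<Rightarrow> (nat \<Rightarrow> rat) set) \<Rightarrow> real" where
  "qp_poly_abs p d c \<xi> = lim (\<lambda>n. padic_abs p
      (\<Sum>\<alpha>\<in>{\<alpha>::'n \<Rightarrow> nat. sum \<alpha> UNIV = d}.
          qp_rep (c \<alpha>) n * (\<Prod>i\<in>UNIV. qp_rep (\<xi> i) n ^ \<alpha> i)))"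

definition elliptic_poly :: "nat \<Rightarrow> nat \<Rightarrow> (('n::finite \<Rightarrow> nat) \<Rightarrow> (nat \<Rightarrow> rat) set) \<Rightarrow> bool" where
  "elliptic_poly p d c = ((\<forall>\<alpha>. c \<alpha> \<in> Qp p) \<and>
     (\<forall>\<xi>\<in>qp_space p. qp_poly_abs p d c \<xi> = 0 \<longleftrightarrow> \<xi> = qp_zero_vec p))"

text \<open>Fourier transform of the heat kernel: F Gamma(t)(xi) = exp(-t |a(xi)|_p^beta).\<close>
definition FGamma :: "nat \<Rightarrow> nat \<Rightarrow> (('n::finite \<Rightarrow> nat) \<Rightarrow> (nat \<Rightarrow> rat) set) \<Rightarrow> real
     \<Rightarrow> real \<Rightarrow> ('n \<Rightarrow> (nat \<Rightarrow> rat) set) \<Rightarrow> real" where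
  "FGamma p d c \<beta> t \<xi> = exp (- t * (qp_poly_abs p d c \<xi>) powr \<beta>)"

end

theory Submission
  imports Defs
begin

text \<open>The increment of \<open>exp (-t A)\<close> is bounded by 1 and, exp being 1-Lipschitz on the
  negative half-line, by \<open>A |r - t|\<close>; hence its square is at most \<open>A |r - t|\<close>. For an elliptic
  polynomial the strong triangle inequality gives \<open>|a(\<xi>)|\<^sub>p\<^sup>\<beta> \<le> C \<parallel>\<xi>\<parallel>\<^sub>p\<^bsup>d\<beta>\<^esup>\<close>, so the moment
  hypothesis makes \<open>\<xi> \<mapsto> |a(\<xi>)|\<^sub>p\<^sup>\<beta>\<close> \<open>\<mu>\<close>-integrable and the double integral is \<open>O(h T)\<close>.
  For the second claim \<open>\<mu>\<close> must be finite: \<open>{0}\<close> is compact, so by outer regularity some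
  neighbourhood of 0 has finite measure, and outside a ball around 0 the moment hypothesis
  bounds the measure (Markov).\<close>

lemma padic_abs_nonneg: "padic_abs p q \<ge> 0"
  by (simp add: padic_abs_def)

lemma padic_abs_zero [simp]: "padic_abs p 0 = 0"
  by (simp add: padic_abs_def)

lemma padic_abs_of_int_divide:
  assumes p: "prime p" and a: "a \<noteq> 0" and b: "b \<noteq> 0"
  shows "padic_abs p (of_int a / of_int b) =
     real p powr (- (real (multiplicity (int p) a) - real (multiplicity (int p) b)))"
proof -
  define q where "q = (of_int a / of_int b :: rat)"
  obtain a' b' where qo: "quotient_of q = (a', b')" by (cases "quotient_of q") auto
  have q0: "q \<noteq> 0" using a b by (simp add: q_def)
  have b': "b' > 0" using quotient_of_denom_pos'[of q] qo by simp
  have a': "a' \<noteq> 0" using q0 quotient_of_div[OF qo] by auto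
  have "(of_int a / of_int b :: rat) = of_int a' / of_int b'"
    using quotient_of_div[OF qo] q_def by simp
  then have "(of_int a * of_int b' :: rat) = of_int a' * of_int b"
    using b b' by (simp add: frac_eq_eq)
  then have "multiplicity (int p) (a * b') = multiplicity (int p) (a' * b)"
    by (metis of_int_eq_iff of_int_mult)
  moreover have "prime_elem (int p)" using p by (simp add: prime_nat_int_transfer)
  ultimately have "multiplicity (int p) a + multiplicity (int p) b' =
      multiplicity (int p) a' + multiplicity (int p) b"
    using a b a' b' by (simp add: prime_elem_multiplicity_mult_distrib)
  then have "real (multiplicity (int p) a') - real (multiplicity (int p) b') =
      real (multiplicity (int p) a) - real (multiplicity (int p) b)"
    by (simp add: of_nat_add[symmetric] del: of_nat_add)
  then show ?thesis unfolding q_def[symmetric] padic_abs_def using q0 qo by simp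
qed

lemma rat_obtain_frac:
  fixes q :: rat
  obtains a b where "q = of_int a / of_int b" "b \<noteq> 0"
  using quotient_of_div[of q] quotient_of_denom_pos'[of q]
  by (metis less_irrefl prod.collapse)

lemma padic_abs_mult:
  assumes p: "prime p"
  shows "padic_abs p (x * y) = padic_abs p x * padic_abs p y"
proof (cases "x = 0 \<or> y = 0")
  case True then show ?thesis by auto
next
  case False
  obtain a b where x: "x = of_int a / of_int b" "b \<noteq> 0" by (rule rat_obtain_frac)
  obtain c d where y: "y = of_int c / of_int d" "d \<noteq> 0" by (rule rat_obtain_frac)
  have a: "a \<noteq> 0" and c: "c \<noteq> 0" using False x y by auto
  have pe: "prime_elem (int p)" using p by (simp add: prime_nat_int_transfer)
  let ?m = "\<lambda>z. real (multiplicity (int p) z)"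
  have "x * y = of_int (a * c) / of_int (b * d)" using x y by simp
  then have "padic_abs p (x * y) = real p powr (- (?m (a * c) - ?m (b * d)))"
    using padic_abs_of_int_divide[OF p, of "a * c" "b * d"] a c x y by simp
  also have "?m (a * c) - ?m (b * d) = (?m a - ?m b) + (?m c - ?m d)"
    using pe a c x y by (simp add: prime_elem_multiplicity_mult_distrib)
  also have "real p powr (- ((?m a - ?m b) + (?m c - ?m d))) =
      real p powr (- (?m a - ?m b)) * real p powr (- (?m c - ?m d))"
    by (simp add: powr_add[symmetric])
  finally show ?thesis
    unfolding x y padic_abs_of_int_divide[OF p a x(2)] padic_abs_of_int_divide[OF p c y(2)] .
qed

lemma padic_abs_minus:
  assumes p: "prime p"
  shows "padic_abs p (- x) = padic_abs p x"
proof (cases "x = 0")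
  case True then show ?thesis by auto
next
  case False
  obtain a b where x: "x = of_int a / of_int b" "b \<noteq> 0" by (rule rat_obtain_frac)
  have a: "a \<noteq> 0" using False x by auto
  have "- x = of_int (- a) / of_int b" using x by simp
  then show ?thesis
    using padic_abs_of_int_divide[OF p a x(2)] padic_abs_of_int_divide[of p "- a" b] p a x
    by (simp add: multiplicity_uminus_right)
qed

lemma padic_abs_minus_commute:
  assumes p: "prime p"
  shows "padic_abs p (x - y) = padic_abs p (y - x)"
  using padic_abs_minus[OF p, of "x - y"] by simp

lemma padic_abs_one:
  assumes p: "prime p"
  shows "padic_abs p 1 = 1"
  using padic_abs_of_int_divide[OF p, of 1 1] p prime_gt_0_nat by simp

text \<open>Only the ordinary triangle inequality is needed, but it comes from the ultrametric one:
  \<open>p\<^bsup>min (v u) (v v)\<^esup>\<close> divides \<open>u + v\<close>.\<close>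

lemma padic_abs_triangle:
  assumes p: "prime p"
  shows "padic_abs p (x + y) \<le> padic_abs p x + padic_abs p y"
proof (cases "x = 0 \<or> y = 0 \<or> x + y = 0")
  case True then show ?thesis using padic_abs_nonneg[of p] by auto
next
  case False
  obtain a b where x: "x = of_int a / of_int b" "b \<noteq> 0" by (rule rat_obtain_frac)
  obtain c d where y: "y = of_int c / of_int d" "d \<noteq> 0" by (rule rat_obtain_frac)
  define u v D where "u = a * d" and "v = c * b" and "D = b * d"
  have D0: "D \<noteq> 0" using x y by (simp add: D_def)
  have xu: "x = of_int u / of_int D" and yv: "y = of_int v / of_int D"
    using x y by (simp_all add: u_def v_def D_def)
  have xy: "x + y = of_int (u + v) / of_int D" using xu yv by (simp add: add_divide_distrib)
  have u0: "u \<noteq> 0" and v0: "v \<noteq> 0" and uv0: "u + v \<noteq> 0" using False xu yv xy by auto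
  let ?m = "multiplicity (int p)"
  have "\<not> is_unit (int p)"
    using p prime_gt_1_nat by auto
  moreover have "int p ^ min (?m u) (?m v) dvd u" "int p ^ min (?m u) (?m v) dvd v"
    by (meson dvd_trans le_imp_power_dvd min.cobounded1 min.cobounded2 multiplicity_dvd)+
  ultimately have k: "min (?m u) (?m v) \<le> ?m (u + v)"
    using uv0 by (intro multiplicity_geI) auto
  have "real p > 1" using p prime_gt_1_nat by auto
  then have "padic_abs p (x + y) \<le> real p powr (- (real (min (?m u) (?m v)) - real (?m D)))"
    unfolding xy padic_abs_of_int_divide[OF p uv0 D0] using k by (intro powr_mono) auto
  also have "\<dots> \<le> padic_abs p x + padic_abs p y"
    using padic_abs_of_int_divide[OF p u0 D0] padic_abs_of_int_divide[OF p v0 D0] xu yv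
      padic_abs_nonneg[of p x] padic_abs_nonneg[of p y]
    by (cases "?m u \<le> ?m v") (simp_all add: min_def)
  finally show ?thesis .
qed

lemma padic_abs_diff_triangle:
  assumes p: "prime p"
  shows "padic_abs p (x - z) \<le> padic_abs p (x - y) + padic_abs p (y - z)"
  using padic_abs_triangle[OF p, of "x - y" "y - z"] by simp

lemma padic_abs_reverse_triangle:
  assumes p: "prime p"
  shows "\<bar>padic_abs p x - padic_abs p y\<bar> \<le> padic_abs p (x - y)"
proof -
  have "padic_abs p x \<le> padic_abs p (x - y) + padic_abs p y"
    "padic_abs p y \<le> padic_abs p (x - y) + padic_abs p x"
    using padic_abs_triangle[OF p, of "x - y" y] padic_abs_triangle[OF p, of "y - x" x]
      padic_abs_minus_commute[OF p, of x y] by simp_all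
  then show ?thesis by linarith
qed

lemma padic_abs_sum_le:
  assumes p: "prime p"
  shows "padic_abs p (\<Sum>a\<in>S. f a) \<le> (\<Sum>a\<in>S. padic_abs p (f a))"
proof (cases "finite S")
  case True then show ?thesis
  proof (induction S rule: finite_induct)
    case (insert x F)
    then show ?case using padic_abs_triangle[OF p, of "f x" "sum f F"] by simp
  qed simp
qed simp

lemma padic_abs_prod:
  assumes p: "prime p"
  shows "padic_abs p (\<Prod>a\<in>S. f a) = (\<Prod>a\<in>S. padic_abs p (f a))"
  by (induction S rule: infinite_finite_induct) (simp_all add: padic_abs_one[OF p] padic_abs_mult[OF p])

lemma padic_abs_power:
  assumes p: "prime p"
  shows "padic_abs p (x ^ k) = padic_abs p x ^ k"
  by (induction k) (simp_all add: padic_abs_one[OF p] padic_abs_mult[OF p])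

lemma qp_cauchy_convergent_abs:
  assumes p: "prime p" and X: "qp_cauchy p X"
  shows "convergent (\<lambda>n. padic_abs p (X n))"
proof -
  have "Cauchy (\<lambda>n. padic_abs p (X n))"
  proof (rule metric_CauchyI)
    fix e :: real assume "e > 0"
    then obtain M where M: "\<forall>m\<ge>M. \<forall>n\<ge>M. padic_abs p (X m - X n) < e"
      using X unfolding qp_cauchy_def by blast
    have "dist (padic_abs p (X m)) (padic_abs p (X n)) < e" if "m \<ge> M" "n \<ge> M" for m n
      using M that padic_abs_reverse_triangle[OF p, of "X m" "X n"] unfolding dist_real_def
      by (meson order.strict_trans1)
    then show "\<exists>M. \<forall>m\<ge>M. \<forall>n\<ge>M. dist (padic_abs p (X m)) (padic_abs p (X n)) < e"
      by blast
  qed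
  then show ?thesis by (simp add: Cauchy_convergent)
qed

lemma qp_cauchy_bounded:
  assumes p: "prime p" and X: "qp_cauchy p X"
  obtains B where "B > 0" "\<And>n. padic_abs p (X n) \<le> B"
proof -
  have "Bseq (\<lambda>n. padic_abs p (X n))"
    using qp_cauchy_convergent_abs[OF p X] convergent_imp_Bseq by blast
  then obtain K where "K > 0" "\<And>n. norm (padic_abs p (X n)) \<le> K" by (auto simp: Bseq_def)
  then show ?thesis using that[of K] by (metis abs_le_D1 real_norm_def)
qed

lemma qp_cauchy_const: "qp_cauchy p (\<lambda>n. a)"
  unfolding qp_cauchy_def by simp

lemma qp_cauchy_add:
  assumes p: "prime p" and X: "qp_cauchy p X" and Y: "qp_cauchy p Y"
  shows "qp_cauchy p (\<lambda>n. X n + Y n)"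
  unfolding qp_cauchy_def
proof (intro allI impI)
  fix e :: real assume "e > 0"
  then obtain M1 M2 where
    M1: "\<forall>m\<ge>M1. \<forall>n\<ge>M1. padic_abs p (X m - X n) < e / 2" and
    M2: "\<forall>m\<ge>M2. \<forall>n\<ge>M2. padic_abs p (Y m - Y n) < e / 2"
    using X Y unfolding qp_cauchy_def by (meson half_gt_zero)
  have "padic_abs p (X m + Y m - (X n + Y n)) < e" if "m \<ge> max M1 M2" "n \<ge> max M1 M2" for m n
  proof -
    have "padic_abs p (X m + Y m - (X n + Y n)) \<le> padic_abs p (X m - X n) + padic_abs p (Y m - Y n)"
      using padic_abs_triangle[OF p, of "X m - X n" "Y m - Y n"] by (simp only: add_diff_add)
    moreover have "padic_abs p (X m - X n) < e / 2" "padic_abs p (Y m - Y n) < e / 2"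
      using M1 M2 that by auto
    ultimately show ?thesis by linarith
  qed
  then show "\<exists>M. \<forall>m\<ge>M. \<forall>n\<ge>M. padic_abs p (X m + Y m - (X n + Y n)) < e" by blast
qed

lemma qp_cauchy_mult:
  assumes p: "prime p" and X: "qp_cauchy p X" and Y: "qp_cauchy p Y"
  shows "qp_cauchy p (\<lambda>n. X n * Y n)"
  unfolding qp_cauchy_def
proof (intro allI impI)
  fix e :: real assume e: "e > 0"
  obtain B1 where B1: "B1 > 0" "\<And>n. padic_abs p (X n) \<le> B1" using qp_cauchy_bounded[OF p X] by blast
  obtain B2 where B2: "B2 > 0" "\<And>n. padic_abs p (Y n) \<le> B2" using qp_cauchy_bounded[OF p Y] by blast
  define e' where "e' = e / (B1 + B2 + 1)"
  have e': "e' > 0" using e B1 B2 by (simp add: e'_def)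
  have key: "(B1 + B2) * e' < e" using e B1 B2 unfolding e'_def by (simp add: field_simps)
  obtain M1 M2 where
    M1: "\<forall>m\<ge>M1. \<forall>n\<ge>M1. padic_abs p (X m - X n) < e'" and
    M2: "\<forall>m\<ge>M2. \<forall>n\<ge>M2. padic_abs p (Y m - Y n) < e'"
    using X Y e' unfolding qp_cauchy_def by meson
  have "padic_abs p (X m * Y m - X n * Y n) < e" if "m \<ge> max M1 M2" "n \<ge> max M1 M2" for m n
  proof -
    have "X m * Y m - X n * Y n = X m * (Y m - Y n) + (X m - X n) * Y n"
      by (simp add: algebra_simps)
    then have "padic_abs p (X m * Y m - X n * Y n) \<le>
        padic_abs p (X m) * padic_abs p (Y m - Y n) + padic_abs p (X m - X n) * padic_abs p (Y n)"
      using padic_abs_triangle[OF p] padic_abs_mult[OF p] by metis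
    also have "\<dots> \<le> B1 * e' + e' * B2"
      using M1 M2 that B1 B2 padic_abs_nonneg[of p] e'
      by (intro add_mono mult_mono) (auto intro: less_imp_le)
    finally show ?thesis using key by (simp add: algebra_simps)
  qed
  then show "\<exists>M. \<forall>m\<ge>M. \<forall>n\<ge>M. padic_abs p (X m * Y m - X n * Y n) < e" by blast
qed

lemma qp_cauchy_sum:
  assumes p: "prime p" and X: "\<And>a. a \<in> S \<Longrightarrow> qp_cauchy p (X a)"
  shows "qp_cauchy p (\<lambda>n. \<Sum>a\<in>S. X a n)"
  using X by (induction S rule: infinite_finite_induct)
    (simp_all add: qp_cauchy_const qp_cauchy_add[OF p])

lemma qp_cauchy_prod:
  assumes p: "prime p" and X: "\<And>a. a \<in> S \<Longrightarrow> qp_cauchy p (X a)"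
  shows "qp_cauchy p (\<lambda>n. \<Prod>a\<in>S. X a n)"
  using X by (induction S rule: infinite_finite_induct)
    (simp_all add: qp_cauchy_const qp_cauchy_mult[OF p])

lemma qp_cauchy_power:
  assumes p: "prime p" and X: "qp_cauchy p X"
  shows "qp_cauchy p (\<lambda>n. X n ^ k)"
  by (induction k) (simp_all add: qp_cauchy_const qp_cauchy_mult[OF p X])

lemma qp_equiv_refl: "qp_equiv p X X"
  unfolding qp_equiv_def by simp

lemma qp_equiv_sym:
  assumes p: "prime p" and "qp_equiv p X Y"
  shows "qp_equiv p Y X"
  using assms(2) unfolding qp_equiv_def by (simp add: padic_abs_minus_commute[OF p])

lemma qp_equiv_trans:
  assumes p: "prime p" and XY: "qp_equiv p X Y" and YZ: "qp_equiv p Y Z"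
  shows "qp_equiv p X Z"
proof -
  have "(\<lambda>n. padic_abs p (X n - Y n) + padic_abs p (Y n - Z n)) \<longlonglongrightarrow> 0"
    using tendsto_add[OF XY[unfolded qp_equiv_def] YZ[unfolded qp_equiv_def]] by simp
  then show ?thesis unfolding qp_equiv_def
    by (rule Lim_null_comparison[rotated])
       (use padic_abs_diff_triangle[OF p] padic_abs_nonneg in \<open>auto intro!: always_eventually\<close>)
qed

lemma Qp_rep:
  assumes "x \<in> Qp p"
  shows "qp_rep x \<in> x" "qp_cauchy p (qp_rep x)"
proof -
  obtain X where x: "x = qp_class p X" "qp_cauchy p X" using assms unfolding Qp_def by blast
  then have "X \<in> x" using qp_equiv_refl unfolding qp_class_def by blast
  then show "qp_rep x \<in> x" unfolding qp_rep_def by (metis someI)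
  then show "qp_cauchy p (qp_rep x)" using x unfolding qp_class_def by blast
qed

lemma qp_abs_LIMSEQ:
  assumes p: "prime p" and "x \<in> Qp p"
  shows "(\<lambda>n. padic_abs p (qp_rep x n)) \<longlonglongrightarrow> qp_abs p x"
  unfolding qp_abs_def using qp_cauchy_convergent_abs[OF p Qp_rep(2)[OF assms(2)]]
  by (simp add: convergent_LIMSEQ_iff)

lemma qp_abs_nonneg:
  assumes p: "prime p" and "x \<in> Qp p"
  shows "qp_abs p x \<ge> 0"
  by (rule LIMSEQ_le_const[OF qp_abs_LIMSEQ[OF assms]]) (simp add: padic_abs_nonneg)

lemma qp_zero_in_Qp: "qp_zero p \<in> Qp p"
  unfolding Qp_def qp_zero_def using qp_cauchy_const by blast

lemma qp_abs_eq_0_imp_zero: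
  assumes p: "prime p" and x: "x \<in> Qp p" and "qp_abs p x = 0"
  shows "x = qp_zero p"
proof -
  obtain X where xX: "x = qp_class p X" "qp_cauchy p X" using x unfolding Qp_def by blast
  have "qp_equiv p X (qp_rep x)" using Qp_rep(1)[OF x] xX unfolding qp_class_def by blast
  moreover have "qp_equiv p (qp_rep x) (\<lambda>_. 0)"
    using qp_abs_LIMSEQ[OF p x] assms(3) unfolding qp_equiv_def by simp
  ultimately have "qp_equiv p X (\<lambda>_. 0)" by (rule qp_equiv_trans[OF p])
  then have "qp_class p X = qp_class p (\<lambda>_. 0)"
    unfolding qp_class_def using qp_equiv_trans[OF p] qp_equiv_sym[OF p] by blast
  then show ?thesis using xX unfolding qp_zero_def by simp
qed

lemma qp_dist_zero_left:
  assumes p: "prime p" and x: "x \<in> Qp p"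
  shows "qp_dist p (qp_zero p) x = qp_abs p x"
proof -
  let ?x = "qp_rep x" and ?z = "qp_rep (qp_zero p)"
  have "qp_equiv p (\<lambda>_. 0) ?z"
    using Qp_rep(1)[OF qp_zero_in_Qp] unfolding qp_zero_def qp_class_def by blast
  then have z: "(\<lambda>n. padic_abs p (?z n)) \<longlonglongrightarrow> 0"
    unfolding qp_equiv_def using padic_abs_minus[OF p] by simp
  have "(\<lambda>n. padic_abs p (?z n - ?x n) - padic_abs p (?x n)) \<longlonglongrightarrow> 0"
  proof (rule Lim_null_comparison[OF always_eventually z], intro allI)
    fix n
    show "norm (padic_abs p (?z n - ?x n) - padic_abs p (?x n)) \<le> padic_abs p (?z n)"
      using padic_abs_reverse_triangle[OF p, of "?z n - ?x n" "- ?x n"] padic_abs_minus[OF p]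
      by simp
  qed
  from tendsto_add[OF this qp_abs_LIMSEQ[OF p x]]
  show ?thesis unfolding qp_dist_def by (simp add: limI)
qed

lemma qp_dist_commute:
  assumes p: "prime p"
  shows "qp_dist p x y = qp_dist p y x"
  unfolding qp_dist_def by (simp add: padic_abs_minus_commute[OF p])

lemma qp_abs_le_qp_norm: "qp_abs p (\<xi> i) \<le> qp_norm p (\<xi> :: 'n::finite \<Rightarrow> _)"
  unfolding qp_norm_def by (rule Max_ge) auto

lemma qp_norm_nonneg:
  assumes p: "prime p" and "\<xi> \<in> qp_space p"
  shows "qp_norm p (\<xi> :: 'n::finite \<Rightarrow> _) \<ge> 0"
proof -
  obtain i :: 'n where True by simp
  have "\<xi> i \<in> Qp p" using assms(2) unfolding qp_space_def by blast
  then show ?thesis using qp_abs_nonneg[OF p] qp_abs_le_qp_norm[of p \<xi> i] by force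
qed

lemma qp_norm_eq_0_imp_zero:
  assumes p: "prime p" and x: "\<xi> \<in> qp_space p" and "qp_norm p (\<xi> :: 'n::finite \<Rightarrow> _) = 0"
  shows "\<xi> = qp_zero_vec p"
proof
  fix i
  have xi: "\<xi> i \<in> Qp p" using x unfolding qp_space_def by blast
  then have "qp_abs p (\<xi> i) = 0"
    using qp_abs_nonneg[OF p xi] qp_abs_le_qp_norm[of p \<xi> i] assms(3) by linarith
  then show "\<xi> i = qp_zero_vec p i" using qp_abs_eq_0_imp_zero[OF p xi] by (simp add: qp_zero_vec_def)
qed

lemma qp_zero_vec_in_qp_space: "qp_zero_vec p \<in> qp_space p"
  unfolding qp_space_def qp_zero_vec_def using qp_zero_in_Qp by blast

lemma qp_vdist_zero_left:
  assumes p: "prime p" and "\<xi> \<in> qp_space p"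
  shows "qp_vdist p (qp_zero_vec p) (\<xi> :: 'n::finite \<Rightarrow> _) = qp_norm p \<xi>"
  using assms(2) unfolding qp_vdist_def qp_norm_def qp_zero_vec_def qp_space_def
  by (simp add: qp_dist_zero_left[OF p])

lemma qp_vdist_commute:
  assumes p: "prime p"
  shows "qp_vdist p \<xi> \<eta> = qp_vdist p \<eta> (\<xi> :: 'n::finite \<Rightarrow> _)"
  unfolding qp_vdist_def by (simp add: qp_dist_commute[OF p])

lemma qp_poly_abs_le:
  assumes p: "prime p" and c: "\<And>\<alpha>. c \<alpha> \<in> Qp p" and x: "\<xi> \<in> qp_space p"
  shows "qp_poly_abs p d c (\<xi> :: 'n::finite \<Rightarrow> _) \<le>
           (\<Sum>\<alpha>\<in>{\<alpha>::'n \<Rightarrow> nat. sum \<alpha> UNIV = d}. qp_abs p (c \<alpha>)) * qp_norm p \<xi> ^ d"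
    and "qp_poly_abs p d c \<xi> \<ge> 0"
proof -
  define S where "S = {\<alpha>::'n \<Rightarrow> nat. sum \<alpha> UNIV = d}"
  have xi: "\<And>i. \<xi> i \<in> Qp p" using x unfolding qp_space_def by blast
  define P where "P = (\<lambda>n. \<Sum>\<alpha>\<in>S. qp_rep (c \<alpha>) n * (\<Prod>i\<in>UNIV. qp_rep (\<xi> i) n ^ \<alpha> i))"
  have "qp_cauchy p P" unfolding P_def
    by (intro qp_cauchy_sum[OF p] qp_cauchy_mult[OF p] qp_cauchy_prod[OF p]
        qp_cauchy_power[OF p] Qp_rep(2) c xi)
  then have lim: "(\<lambda>n. padic_abs p (P n)) \<longlonglongrightarrow> qp_poly_abs p d c \<xi>"
    using qp_cauchy_convergent_abs[OF p] unfolding qp_poly_abs_def P_def S_def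
    by (simp add: convergent_LIMSEQ_iff)
  show "qp_poly_abs p d c \<xi> \<ge> 0"
    by (rule LIMSEQ_le_const[OF lim]) (simp add: padic_abs_nonneg)
  define L where "L = (\<Sum>\<alpha>\<in>S. qp_abs p (c \<alpha>) * (\<Prod>i\<in>UNIV. qp_abs p (\<xi> i) ^ \<alpha> i))"
  have "(\<lambda>n. \<Sum>\<alpha>\<in>S. padic_abs p (qp_rep (c \<alpha>) n) *
      (\<Prod>i\<in>UNIV. padic_abs p (qp_rep (\<xi> i) n) ^ \<alpha> i)) \<longlonglongrightarrow> L"
    unfolding L_def
    by (intro tendsto_sum tendsto_mult tendsto_prod tendsto_power qp_abs_LIMSEQ[OF p] c xi)
  moreover have "padic_abs p (P n) \<le> (\<Sum>\<alpha>\<in>S. padic_abs p (qp_rep (c \<alpha>) n) *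
      (\<Prod>i\<in>UNIV. padic_abs p (qp_rep (\<xi> i) n) ^ \<alpha> i))" for n
    unfolding P_def
    using padic_abs_sum_le[OF p, of "\<lambda>\<alpha>. qp_rep (c \<alpha>) n * (\<Prod>i\<in>UNIV. qp_rep (\<xi> i) n ^ \<alpha> i)" S]
    by (simp add: padic_abs_mult[OF p] padic_abs_prod[OF p] padic_abs_power[OF p])
  ultimately have "qp_poly_abs p d c \<xi> \<le> L"
    by (intro LIMSEQ_le[OF lim]) auto
  also have "L \<le> (\<Sum>\<alpha>\<in>S. qp_abs p (c \<alpha>) * qp_norm p \<xi> ^ d)"
    unfolding L_def
  proof (rule sum_mono)
    fix \<alpha> assume \<alpha>: "\<alpha> \<in> S"
    have "(\<Prod>i\<in>UNIV. qp_abs p (\<xi> i) ^ \<alpha> i) \<le> (\<Prod>i\<in>UNIV. qp_norm p \<xi> ^ \<alpha> i)"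
      by (intro prod_mono conjI power_mono zero_le_power qp_abs_nonneg[OF p xi] qp_abs_le_qp_norm)
    also have "\<dots> = qp_norm p \<xi> ^ d" using \<alpha> unfolding S_def by (simp add: power_sum[symmetric])
    finally show "qp_abs p (c \<alpha>) * (\<Prod>i\<in>UNIV. qp_abs p (\<xi> i) ^ \<alpha> i) \<le>
        qp_abs p (c \<alpha>) * qp_norm p \<xi> ^ d"
      using qp_abs_nonneg[OF p c] by (simp add: mult_left_mono)
  qed
  finally show "qp_poly_abs p d c \<xi> \<le>
      (\<Sum>\<alpha>\<in>{\<alpha>::'n \<Rightarrow> nat. sum \<alpha> UNIV = d}. qp_abs p (c \<alpha>)) * qp_norm p \<xi> ^ d"
    unfolding S_def by (simp add: sum_distrib_right)
qed

text \<open>Ellipticity is only needed in degree \<open>d = 0\<close>, where \<open>0 powr 0 = 0\<close> makes the right-hand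
  side vanish at \<open>\<xi> = 0\<close>.\<close>

lemma elliptic_poly_abs_powr_le:
  assumes p: "prime p" and ell: "elliptic_poly p d c" and "\<beta> \<ge> 0" and x: "\<xi> \<in> qp_space p"
  shows "qp_poly_abs p d c (\<xi> :: 'n::finite \<Rightarrow> _) powr \<beta> \<le>
     (\<Sum>\<alpha>\<in>{\<alpha>::'n \<Rightarrow> nat. sum \<alpha> UNIV = d}. qp_abs p (c \<alpha>)) powr \<beta> * qp_norm p \<xi> powr (real d * \<beta>)"
proof (cases "qp_norm p \<xi> = 0")
  case True
  then have "qp_poly_abs p d c \<xi> = 0"
    using qp_norm_eq_0_imp_zero[OF p x] ell x unfolding elliptic_poly_def by blast
  then show ?thesis by simp
next
  case False
  have c: "\<And>\<alpha>. c \<alpha> \<in> Qp p" using ell unfolding elliptic_poly_def by blast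
  define C where "C = (\<Sum>\<alpha>\<in>{\<alpha>::'n \<Rightarrow> nat. sum \<alpha> UNIV = d}. qp_abs p (c \<alpha>))"
  have "C \<ge> 0" unfolding C_def using qp_abs_nonneg[OF p c] by (simp add: sum_nonneg)
  have "qp_norm p \<xi> > 0" using False qp_norm_nonneg[OF p x] by simp
  have "qp_poly_abs p d c \<xi> powr \<beta> \<le> (C * qp_norm p \<xi> ^ d) powr \<beta>"
    using qp_poly_abs_le[OF p c x] \<open>\<beta> \<ge> 0\<close> unfolding C_def by (intro powr_mono2) auto
  also have "\<dots> = C powr \<beta> * qp_norm p \<xi> powr (real d * \<beta>)"
    using \<open>C \<ge> 0\<close> \<open>qp_norm p \<xi> > 0\<close>
    by (simp add: powr_mult powr_realpow[symmetric] powr_powr)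
  finally show ?thesis unfolding C_def .
qed

text \<open>Unlike \<open>nn_integral_cmult\<close>, this needs no measurability of \<open>f\<close>: scaling
  by \<open>1 / r\<close> maps the simple minorants of \<open>r f\<close> to simple minorants of \<open>f\<close>.\<close>

lemma nn_integral_cmult_le:
  fixes r :: real
  assumes "r \<ge> 0"
  shows "(\<integral>\<^sup>+x. ennreal r * f x \<partial>M) \<le> ennreal r * (\<integral>\<^sup>+x. f x \<partial>M)"
proof (cases "r = 0")
  case True then show ?thesis by simp
next
  case False
  then have inv: "ennreal (1 / r) * ennreal r = 1" using assms by (simp add: ennreal_mult[symmetric])
  show ?thesis
    unfolding nn_integral_def
  proof (rule SUP_least)
    fix g assume g: "g \<in> {g. simple_function M g \<and> g \<le> (\<lambda>x. ennreal r * f x)}"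
    define g' where "g' = (\<lambda>x. ennreal (1 / r) * g x)"
    have sg: "simple_function M g'" unfolding g'_def using g by (auto intro: simple_function_compose1)
    have "g' x \<le> f x" for x
    proof -
      have "g' x \<le> ennreal (1 / r) * (ennreal r * f x)"
        unfolding g'_def using g by (auto intro: mult_left_mono le_funD)
      also have "\<dots> = f x" using inv by (simp add: mult.assoc[symmetric])
      finally show ?thesis .
    qed
    have "g = (\<lambda>x. ennreal r * g' x)" unfolding g'_def
      using inv by (simp add: mult.assoc[symmetric] mult.commute)
    then have "integral\<^sup>S M g = ennreal r * integral\<^sup>S M g'"
      by (simp add: sg)
    also have "\<dots> \<le> ennreal r * (SUP g\<in>{g. simple_function M g \<and> g \<le> f}. integral\<^sup>S M g)"
      using sg \<open>\<And>x. g' x \<le> f x\<close> by (intro mult_left_mono SUP_upper) (auto simp: le_fun_def)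
    finally show "integral\<^sup>S M g \<le> ennreal r * (SUP g\<in>{g. simple_function M g \<and> g \<le> f}. integral\<^sup>S M g)" .
  qed
qed

lemma qp_regular_borel_sets:
  assumes "qp_regular_borel p \<mu>"
  shows "sets \<mu> = sigma_sets (qp_space p) {U. qp_open p U}"
    and "space \<mu> = qp_space p"
proof -
  have sets: "sets \<mu> = sets (qp_borel p)" using assms unfolding qp_regular_borel_def by blast
  have "{U. qp_open p U} \<subseteq> Pow (qp_space p)" unfolding qp_open_def by blast
  then show "sets \<mu> = sigma_sets (qp_space p) {U. qp_open p U}"
    using sets sets_measure_of unfolding qp_borel_def by simp
  show "space \<mu> = qp_space p"
    using sets_eq_imp_space_eq[OF sets] unfolding qp_borel_def by (simp add: space_measure_of_conv)
qed

lemma qp_open_compl_zero: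
  assumes p: "prime p"
  shows "qp_open p (qp_space p - {qp_zero_vec p :: 'n::finite \<Rightarrow> _})"
  unfolding qp_open_def
proof (intro conjI ballI)
  fix \<eta> :: "'n \<Rightarrow> _" assume \<eta>: "\<eta> \<in> qp_space p - {qp_zero_vec p}"
  then have "qp_norm p \<eta> > 0"
    using qp_norm_eq_0_imp_zero[OF p] qp_norm_nonneg[OF p] by force
  moreover have "qp_vdist p \<eta> (qp_zero_vec p) = qp_norm p \<eta>"
    using \<eta> qp_vdist_commute[OF p, of \<eta>] qp_vdist_zero_left[OF p, of \<eta>] by simp
  ultimately show "\<exists>e>0. {\<zeta> \<in> qp_space p. qp_vdist p \<eta> \<zeta> < e} \<subseteq> qp_space p - {qp_zero_vec p}"
    by (intro exI[of _ "qp_norm p \<eta>"]) auto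
qed blast

lemma qp_compact_singleton:
  assumes "x \<in> qp_space p"
  shows "qp_compact p {x}"
  unfolding qp_compact_def
proof (intro conjI allI impI)
  fix C assume "(\<forall>U\<in>C. qp_open p U) \<and> {x} \<subseteq> \<Union> C"
  then obtain U where "U \<in> C" "x \<in> U" by blast
  then show "\<exists>F\<subseteq>C. finite F \<and> {x} \<subseteq> \<Union> F" by (intro exI[of _ "{U}"]) auto
qed (use assms in blast)

lemma qp_regular_borel_finite_nbhd_zero:
  fixes \<mu> :: "('n::finite \<Rightarrow> (nat \<Rightarrow> rat) set) measure"
  assumes p: "prime p" and reg: "qp_regular_borel p \<mu>"
  obtains U where "qp_open p U" "qp_zero_vec p \<in> U" "emeasure \<mu> U < \<infinity>"
proof -
  let ?z = "qp_zero_vec p :: 'n \<Rightarrow> _"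
  have "qp_space p - (qp_space p - {?z}) \<in> sigma_sets (qp_space p) {U. qp_open p U}"
    using qp_open_compl_zero[OF p] by (intro sigma_sets.Compl sigma_sets.Basic) auto
  moreover have "qp_space p - (qp_space p - {?z}) = {?z}" using qp_zero_vec_in_qp_space by blast
  ultimately have "{?z} \<in> sets \<mu>" using qp_regular_borel_sets(1)[OF reg] by simp
  then have "emeasure \<mu> {?z} = (INF U\<in>{U. qp_open p U \<and> {?z} \<subseteq> U}. emeasure \<mu> U)"
    using reg unfolding qp_regular_borel_def by blast
  moreover have "emeasure \<mu> {?z} < \<infinity>"
    using reg qp_compact_singleton[OF qp_zero_vec_in_qp_space] unfolding qp_regular_borel_def by blast
  ultimately show ?thesis using that by (auto simp: INF_less_iff)
qed

lemma qp_regular_borel_finite_if_moment: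
  fixes \<mu> :: "('n::finite \<Rightarrow> (nat \<Rightarrow> rat) set) measure"
  assumes p: "prime p" and reg: "qp_regular_borel p \<mu>" and "a \<ge> 0"
    and moment: "(\<integral>\<^sup>+\<xi>. ennreal (qp_norm p \<xi> powr a) \<partial>\<mu>) < \<infinity>"
  shows "emeasure \<mu> (space \<mu>) < \<infinity>"
proof -
  note sp = qp_regular_borel_sets(2)[OF reg]
  obtain U where U: "qp_open p U" "qp_zero_vec p \<in> U" "emeasure \<mu> U < \<infinity>"
    using qp_regular_borel_finite_nbhd_zero[OF p reg] .
  obtain e where e: "e > 0" "{\<eta> \<in> qp_space p. qp_vdist p (qp_zero_vec p) \<eta> < e} \<subseteq> U"
    using U(1,2) unfolding qp_open_def by blast
  have far: "e powr a \<le> qp_norm p \<eta> powr a" if "\<eta> \<in> qp_space p - U" for \<eta>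
  proof -
    have "\<not> qp_vdist p (qp_zero_vec p) \<eta> < e" using e(2) that by blast
    then have "e \<le> qp_norm p \<eta>" using that qp_vdist_zero_left[OF p, of \<eta>] by simp
    then show ?thesis using e(1) \<open>a \<ge> 0\<close> by (intro powr_mono2) auto
  qed
  have U_sets: "U \<in> sets \<mu>"
    using U(1) qp_regular_borel_sets(1)[OF reg] by (auto intro: sigma_sets.Basic)
  then have cU: "qp_space p - U \<in> sets \<mu>" using sp by (metis sets.compl_sets)
  have "ennreal (e powr a) * emeasure \<mu> (qp_space p - U) =
      (\<integral>\<^sup>+\<xi>. ennreal (e powr a) * indicator (qp_space p - U) \<xi> \<partial>\<mu>)"
    using cU by (simp add: nn_integral_cmult_indicator)
  also have "\<dots> \<le> (\<integral>\<^sup>+\<xi>. ennreal (qp_norm p \<xi> powr a) \<partial>\<mu>)"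
    using far by (intro nn_integral_mono) (simp add: indicator_def ennreal_leI)
  finally have "ennreal (e powr a) * emeasure \<mu> (qp_space p - U) < \<infinity>"
    using moment by simp
  then have "emeasure \<mu> (qp_space p - U) < \<infinity>"
    using e(1) by (auto simp: ennreal_mult_less_top)
  have "space \<mu> = U \<union> (qp_space p - U)"
    using sp U(1) unfolding qp_open_def by blast
  then have "emeasure \<mu> (space \<mu>) \<le> emeasure \<mu> U + emeasure \<mu> (qp_space p - U)"
    using emeasure_subadditive[OF U_sets cU] by simp
  also have "\<dots> < \<infinity>" using U(3) \<open>emeasure \<mu> (qp_space p - U) < \<infinity>\<close> by simp
  finally show ?thesis .
qed

lemma nn_integral_elliptic_poly_abs_powr_finite:
  fixes \<mu> :: "('n::finite \<Rightarrow> (nat \<Rightarrow> rat) set) measure"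
  assumes p: "prime p" and ell: "elliptic_poly p d c" and "\<beta> \<ge> 0" and reg: "qp_regular_borel p \<mu>"
    and moment: "(\<integral>\<^sup>+\<xi>. ennreal (qp_norm p \<xi> powr (real d * \<beta>)) \<partial>\<mu>) < \<infinity>"
  shows "(\<integral>\<^sup>+\<xi>. ennreal (qp_poly_abs p d c \<xi> powr \<beta>) \<partial>\<mu>) < \<infinity>"
proof -
  define K where "K = (\<Sum>\<alpha>\<in>{\<alpha>::'n \<Rightarrow> nat. sum \<alpha> UNIV = d}. qp_abs p (c \<alpha>)) powr \<beta>"
  have "(\<integral>\<^sup>+\<xi>. ennreal (qp_poly_abs p d c \<xi> powr \<beta>) \<partial>\<mu>) \<le>
      (\<integral>\<^sup>+\<xi>. ennreal K * ennreal (qp_norm p \<xi> powr (real d * \<beta>)) \<partial>\<mu>)"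
    using elliptic_poly_abs_powr_le[OF p ell \<open>\<beta> \<ge> 0\<close>] qp_regular_borel_sets(2)[OF reg]
    by (intro nn_integral_mono) (simp add: K_def ennreal_mult[symmetric] ennreal_leI)
  also have "\<dots> \<le> ennreal K * (\<integral>\<^sup>+\<xi>. ennreal (qp_norm p \<xi> powr (real d * \<beta>)) \<partial>\<mu>)"
    by (rule nn_integral_cmult_le) (simp add: K_def)
  also have "\<dots> < \<infinity>" using moment by (simp add: ennreal_mult_less_top)
  finally show ?thesis .
qed

lemma exp_diff_le_of_nonpos:
  fixes x y :: real
  assumes "x \<le> y" "y \<le> 0"
  shows "exp y - exp x \<le> y - x"
proof -
  have "exp y * (1 - exp (x - y)) \<le> 1 - exp (x - y)"
    using assms by (intro mult_left_le_one_le) auto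
  also have "\<dots> \<le> y - x" using exp_ge_add_one_self[of "x - y"] by linarith
  finally show ?thesis by (simp add: algebra_simps exp_diff)
qed

lemma abs_exp_diff_le_of_nonpos:
  fixes x y :: real
  assumes "x \<le> 0" "y \<le> 0"
  shows "\<bar>exp x - exp y\<bar> \<le> \<bar>x - y\<bar>"
  using exp_diff_le_of_nonpos[of x y] exp_diff_le_of_nonpos[of y x] assms
  by (cases "x \<le> y") auto

lemma exp_increment_sq_le:
  fixes A r t :: real
  assumes "A \<ge> 0" "r \<ge> 0" "t \<ge> 0"
  shows "(exp (- r * A) - exp (- t * A))\<^sup>2 \<le> A * \<bar>r - t\<bar>"
proof -
  define D where "D = \<bar>exp (- r * A) - exp (- t * A)\<bar>"
  have nonpos: "- r * A \<le> 0" "- t * A \<le> 0" using assms by auto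
  then have "exp (- r * A) \<le> 1" "exp (- t * A) \<le> 1" by auto
  then have "D \<le> 1" unfolding D_def using exp_gt_zero[of "- r * A"] exp_gt_zero[of "- t * A"]
    by linarith
  have "\<bar>- r * A - - t * A\<bar> = A * \<bar>r - t\<bar>"
  proof -
    have "- r * A - - t * A = A * (t - r)" by (simp add: algebra_simps)
    then show ?thesis using assms(1) by (simp add: abs_mult abs_minus_commute)
  qed
  then have "D \<le> A * \<bar>r - t\<bar>" unfolding D_def using abs_exp_diff_le_of_nonpos[OF nonpos] by simp
  have "(exp (- r * A) - exp (- t * A))\<^sup>2 = D * D" unfolding D_def by (simp add: power2_eq_square)
  also have "\<dots> \<le> D" using \<open>D \<le> 1\<close> mult_right_mono[of D 1 D] by (simp add: D_def)
  finally show ?thesis using \<open>D \<le> A * \<bar>r - t\<bar>\<close> by simp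
qed

lemma SUP_exp_increment_sq_le:
  fixes A t h :: real
  assumes "A \<ge> 0" "t \<ge> 0" "h > 0"
  shows "(SUP r\<in>{r. 0 \<le> r \<and> \<bar>r - t\<bar> < h}. ennreal ((exp (- r * A) - exp (- t * A))\<^sup>2))
    \<le> ennreal (h * A)"
proof (rule SUP_least)
  fix r assume r: "r \<in> {r. 0 \<le> r \<and> \<bar>r - t\<bar> < h}"
  have "(exp (- r * A) - exp (- t * A))\<^sup>2 \<le> A * \<bar>r - t\<bar>"
    using exp_increment_sq_le[of A r t] assms r by simp
  also have "\<dots> \<le> h * A" using r assms(1) by (simp add: mult.commute mult_left_mono)
  finally show "ennreal ((exp (- r * A) - exp (- t * A))\<^sup>2) \<le> ennreal (h * A)"
    by (rule ennreal_leI)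
qed

lemma nn_integral_SUP_exp_increment_sq_le:
  fixes A :: "'a \<Rightarrow> real"
  assumes A: "\<And>\<xi>. \<xi> \<in> space \<mu> \<Longrightarrow> A \<xi> \<ge> 0" and I: "(\<integral>\<^sup>+\<xi>. ennreal (A \<xi>) \<partial>\<mu>) = ennreal I"
    and "I \<ge> 0" "h > 0"
  shows "(\<integral>\<^sup>+t\<in>{0..T}. (\<integral>\<^sup>+\<xi>.
      (SUP r\<in>{r. 0 \<le> r \<and> \<bar>r - t\<bar> < h}. ennreal ((exp (- r * A \<xi>) - exp (- t * A \<xi>))\<^sup>2)) \<partial>\<mu>)
      \<partial>lborel) \<le> ennreal (h * I * max T 0)"
proof -
  have inner: "(\<integral>\<^sup>+\<xi>. (SUP r\<in>{r. 0 \<le> r \<and> \<bar>r - t\<bar> < h}.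
      ennreal ((exp (- r * A \<xi>) - exp (- t * A \<xi>))\<^sup>2)) \<partial>\<mu>) \<le> ennreal (h * I)" if "t \<ge> 0" for t
  proof -
    have "(\<integral>\<^sup>+\<xi>. (SUP r\<in>{r. 0 \<le> r \<and> \<bar>r - t\<bar> < h}.
        ennreal ((exp (- r * A \<xi>) - exp (- t * A \<xi>))\<^sup>2)) \<partial>\<mu>) \<le> (\<integral>\<^sup>+\<xi>. ennreal h * ennreal (A \<xi>) \<partial>\<mu>)"
      using SUP_exp_increment_sq_le A that \<open>h > 0\<close>
      by (intro nn_integral_mono) (simp add: ennreal_mult[symmetric])
    also have "\<dots> \<le> ennreal h * ennreal I"
      using nn_integral_cmult_le[of h \<mu> "\<lambda>\<xi>. ennreal (A \<xi>)"] I \<open>h > 0\<close> by simp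
    finally show ?thesis using \<open>h > 0\<close> \<open>I \<ge> 0\<close> by (simp add: ennreal_mult)
  qed
  have "(\<integral>\<^sup>+t\<in>{0..T}. (\<integral>\<^sup>+\<xi>.
      (SUP r\<in>{r. 0 \<le> r \<and> \<bar>r - t\<bar> < h}. ennreal ((exp (- r * A \<xi>) - exp (- t * A \<xi>))\<^sup>2)) \<partial>\<mu>)
      \<partial>lborel) \<le> (\<integral>\<^sup>+t. ennreal (h * I) * indicator {0..T} t \<partial>lborel)"
    using inner by (intro nn_integral_mono) (simp split: split_indicator)
  also have "\<dots> = ennreal (h * I) * emeasure lborel {0..T}"
    by (rule nn_integral_cmult_indicator) simp
  also have "\<dots> = ennreal (h * I * max T 0)"
    using \<open>h > 0\<close> \<open>I \<ge> 0\<close> by (simp add: emeasure_lborel_Icc_eq ennreal_mult' max_def)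
  finally show ?thesis .
qed

lemma nn_integral_SUP_exp_increment_sq_tendsto_0:
  fixes A :: "'a \<Rightarrow> real"
  assumes "\<And>\<xi>. \<xi> \<in> space \<mu> \<Longrightarrow> A \<xi> \<ge> 0" and "(\<integral>\<^sup>+\<xi>. ennreal (A \<xi>) \<partial>\<mu>) < \<infinity>"
  shows "((\<lambda>h. \<integral>\<^sup>+t\<in>{0..T}. (\<integral>\<^sup>+\<xi>.
      (SUP r\<in>{r. 0 \<le> r \<and> \<bar>r - t\<bar> < h}. ennreal ((exp (- r * A \<xi>) - exp (- t * A \<xi>))\<^sup>2)) \<partial>\<mu>)
      \<partial>lborel) \<longlongrightarrow> 0) (at_right 0)"
proof -
  obtain I where I: "I \<ge> 0" "(\<integral>\<^sup>+\<xi>. ennreal (A \<xi>) \<partial>\<mu>) = ennreal I"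
    using assms(2) by (auto simp: less_top_ennreal)
  have "((\<lambda>h::real. h * I * max T 0) \<longlongrightarrow> 0 * I * max T 0) (at_right 0)"
    by (intro tendsto_mult tendsto_const tendsto_ident_at)
  from tendsto_ennrealI[OF this]
  have lim: "((\<lambda>h. ennreal (h * I * max T 0)) \<longlongrightarrow> 0) (at_right 0)" by simp
  have bound: "\<forall>\<^sub>F h in at_right 0. (\<integral>\<^sup>+t\<in>{0..T}. (\<integral>\<^sup>+\<xi>.
      (SUP r\<in>{r. 0 \<le> r \<and> \<bar>r - t\<bar> < h}. ennreal ((exp (- r * A \<xi>) - exp (- t * A \<xi>))\<^sup>2)) \<partial>\<mu>)
      \<partial>lborel) \<le> ennreal (h * I * max T 0)"
    using eventually_at_right_less[of 0]
    by (rule eventually_mono) (rule nn_integral_SUP_exp_increment_sq_le[OF assms(1) I(2) I(1)])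
  show ?thesis
    by (intro tendsto_sandwich[OF _ bound tendsto_const lim] always_eventually allI zero_le)
qed

lemma nn_integral_exp_sq_finite:
  fixes A :: "'a \<Rightarrow> real"
  assumes "emeasure \<mu> (space \<mu>) < \<infinity>" and "\<And>\<xi>. \<xi> \<in> space \<mu> \<Longrightarrow> A \<xi> \<ge> 0"
  shows "(\<integral>\<^sup>+t\<in>{0..T}. (\<integral>\<^sup>+\<xi>. ennreal ((exp (- t * A \<xi>))\<^sup>2) \<partial>\<mu>) \<partial>lborel) < \<infinity>"
proof -
  have "(\<integral>\<^sup>+\<xi>. ennreal ((exp (- t * A \<xi>))\<^sup>2) \<partial>\<mu>) \<le> emeasure \<mu> (space \<mu>)" if "t \<ge> 0" for t
  proof -
    have "(\<integral>\<^sup>+\<xi>. ennreal ((exp (- t * A \<xi>))\<^sup>2) \<partial>\<mu>) \<le> (\<integral>\<^sup>+\<xi>. 1 \<partial>\<mu>)"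
      using assms(2) that by (intro nn_integral_mono) (simp add: ennreal_leI power_le_one)
    then show ?thesis by simp
  qed
  then have "(\<integral>\<^sup>+t\<in>{0..T}. (\<integral>\<^sup>+\<xi>. ennreal ((exp (- t * A \<xi>))\<^sup>2) \<partial>\<mu>) \<partial>lborel)
      \<le> (\<integral>\<^sup>+t. emeasure \<mu> (space \<mu>) * indicator {0..T} t \<partial>lborel)"
    by (intro nn_integral_mono) (auto simp: indicator_def)
  also have "\<dots> = emeasure \<mu> (space \<mu>) * emeasure lborel {0..T}"
    by (simp add: nn_integral_cmult_indicator)
  also have "\<dots> < \<infinity>"
    using assms(1) by (simp add: emeasure_lborel_Icc_eq ennreal_mult_less_top)
  finally show ?thesis .
qed

theorem lemma6:
  fixes p d :: nat and \<beta> T :: real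
    and c :: "('n::finite \<Rightarrow> nat) \<Rightarrow> (nat \<Rightarrow> rat) set"
    and \<mu> :: "('n \<Rightarrow> (nat \<Rightarrow> rat) set) measure"
  assumes "prime p"
    and "elliptic_poly p d c"
    and "\<beta> > 0"
    and "T > 0"
    and "qp_regular_borel p \<mu>"
    and "(\<integral>\<^sup>+\<xi>. ennreal (qp_norm p \<xi> powr (real d * \<beta>)) \<partial>\<mu>) < \<infinity>"
  shows "((\<lambda>h. \<integral>\<^sup>+t\<in>{0..T}. (\<integral>\<^sup>+\<xi>.
             (SUP r\<in>{r. 0 \<le> r \<and> \<bar>r - t\<bar> < h}.
                ennreal ((FGamma p d c \<beta> r \<xi> - FGamma p d c \<beta> t \<xi>)\<^sup>2)) \<partial>\<mu>) \<partial>lborel)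
           \<longlongrightarrow> 0) (at_right 0) \<and>
         (\<integral>\<^sup>+t\<in>{0..T}. (\<integral>\<^sup>+\<xi>. ennreal ((FGamma p d c \<beta> t \<xi>)\<^sup>2) \<partial>\<mu>) \<partial>lborel) < \<infinity>"
proof -
  define A where "A \<xi> = qp_poly_abs p d c \<xi> powr \<beta>" for \<xi>
  have FGamma_eq: "FGamma p d c \<beta> t \<xi> = exp (- t * A \<xi>)" for t \<xi>
    unfolding FGamma_def A_def ..
  have A_nonneg: "A \<xi> \<ge> 0" for \<xi> unfolding A_def by simp
  have A_integrable: "(\<integral>\<^sup>+\<xi>. ennreal (A \<xi>) \<partial>\<mu>) < \<infinity>"
    unfolding A_def
    using nn_integral_elliptic_poly_abs_powr_finite[OF assms(1,2) _ assms(5,6)] assms(3) by simp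
  have \<mu>_finite: "emeasure \<mu> (space \<mu>) < \<infinity>"
    using qp_regular_borel_finite_if_moment[OF assms(1,5) _ assms(6)] assms(3) by simp
  show ?thesis
    unfolding FGamma_eq
    using nn_integral_SUP_exp_increment_sq_tendsto_0[OF A_nonneg A_integrable]
      nn_integral_exp_sq_finite[OF \<mu>_finite A_nonneg]
    by (rule conjI)
qed

end
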